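(* Let ${\mathcal R}$ be a similarity relation, $\mu$ a cut value, and $t,s$ higher-order patterns. If $\mathsf{HOPSU}$, started on $\{t\simeq^?_{{\mathcal R},\mu}s\};\varepsilon;1$, stops with a configuration $\emptyset;\sigma;\mathfrak{d}$, then $\mathfrak{d}\ge\mu$ and ${\mathcal R}(t\sigma,s\sigma)=\mathfrak{d}$, i.e. $\sigma$ is an $({\mathcal R},\mu)$-unifier of $t$ and $s$ with degree $\mathfrak{d}$.
   Context: Terms: simply typed $\lambda$-terms over disjoint countably infinite sets $\mathcal{V}$ (typed variables) and $\mathcal{F}$ (typed constants), types $\tau::=\delta\mid\tau\to\tau$. Terms are identified modulo $\alpha$, kept $\beta$-normal, and $\eta$-expanded except that arguments of free variables are kept $\eta$-normal (i.e. are bound variables); a term is written $\lambda x_1,\dots,x_n.h(t_1,\dots,t_m)$ with head $h$. Free variables are written $F,G,H,X,Y,\dots$, bound variables $x,y,z,\dots$. A higher-order pattern is a term where every free variable occurrence is applied to a list of pairwise distinct bound variables; all terms in problems and substitutions are higher-order patterns. Substitutions $\sigma$ are type-preserving maps with finite domain $\mathit{Dom}(\sigma)=\{X\mid X\sigma\neq X\}$, applied postfix ($t\sigma$, capture-avoiding, followed by $\beta$-normalization); $\sigma\vartheta$ means first $\sigma$ then $\vartheta$; $\varepsilon$ is the identity; $\varphi|_V$ is the restriction to $V$; $\mathtt{fv}(t)$ is the set of free variables. Fuzzy setting: T-norm $\wedge=\min$. ${\mathcal R}_A$ is a similarity relation (reflexive, symmetric, min-transitive map to $[0,1]$) on $\mathcal{F}\cup\mathcal{V}$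 with ${\mathcal R}_A(x,y)=0$ for distinct variables, ${\mathcal R}_A(f,g)=0$ for constants of different types, ${\mathcal R}_A(x,f)=0$ for a variable and a constant. It induces ${\mathcal R}$ on terms: on normal forms ${\mathcal R}(a,b)={\mathcal R}_A(a,b)$ for symbols, ${\mathcal R}((t_1\,s_1),(t_2\,s_2))={\mathcal R}(t_1,t_2)\wedge{\mathcal R}(s_1,s_2)$, ${\mathcal R}(\lambda x.t,\lambda y.s)={\mathcal R}(t\{x\mapsto z\},s\{y\mapsto z\})$ for fresh $z$ of the same type, $0$ otherwise. A cut value is $\mu\in(0,1]$. An equation is written $t\simeq^?_{{\mathcal R},\mu}s$; a unification problem is a finite set of equations. A substitution $\sigma$ is an $({\mathcal R},\mu)$-unifier of $\{t_1\simeq^?_{{\mathcal R},\mu}s_1,\dots,t_n\simeq^?_{{\mathcal R},\mu}s_n\}$ with degree $\mathfrak{d}$ if ${\mathcal R}(t_1\sigma,s_1\sigma)\wedge\dots\wedge{\mathcal R}(t_n\sigma,s_n\sigma)=\mathfrak{d}\ge\mu$. Algorithm $\mathsf{HOPSU}$: it works on configurations $P;\sigma;\mathfrak{d}$ ($P$ a problem, $\sigma$ a substitution, $\mathfrak{d}\ge\mu$ a degree) or $\bot$, applying the following rules to a selected equation as long as possible ($\uplus$ is disjoint union): (Abs) $\{\lambda x.t\simeq^?\lambda x.s\}\uplus P;\sigma;\mathfrak{d}\leadsto\{t\simeq^?s\}\cup P;\sigma;\mathfrak{d}$. (Dec) $\{f(t_1,\dots,t_n)\simeq^?g(s_1,\dots,s_n)\}\uplus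 P;\sigma;\mathfrak{d}\leadsto\{t_1\simeq^?s_1,\dots,t_n\simeq^?s_n\}\cup P;\sigma;\mathfrak{d}\wedge{\mathcal R}(f,g)$, where $f,g$ are rigid heads, $n\ge0$, and $\mathfrak{d}\wedge{\mathcal R}(f,g)\ge\mu$. (SV) $\{F(x_1,\dots,x_n)\simeq^?F(y_1,\dots,y_n)\}\uplus P;\sigma;\mathfrak{d}\leadsto P\vartheta;\sigma\vartheta;\mathfrak{d}$, where $\{z_1,\dots,z_m\}=\{x_i\mid x_i=y_i\}$ and $\vartheta=\{F\mapsto\lambda x_1,\dots,x_n.H(z_1,\dots,z_m)\}$ with $H$ fresh. (Ori) $\{a(s_1,\dots,s_m)\simeq^?F(x_1,\dots,x_n)\}\uplus P;\sigma;\mathfrak{d}\leadsto\{F(x_1,\dots,x_n)\simeq^?a(s_1,\dots,s_m)\}\cup P;\sigma;\mathfrak{d}$, where $F$ is free and $a$ is a constant or $a\in\{x_1,\dots,x_n\}$. (LF) $\{F(x_1,\dots,x_n)\simeq^?a(s_1,\dots,s_m)\}\uplus P;\sigma;\mathfrak{d}\leadsto P\vartheta;\sigma\vartheta;\mathfrak{d}$, where $F\notin\mathtt{fv}(a(s_1,\dots,s_m))$, $a$ is a constant, a free variable, or in $\{x_1,\dots,x_n\}$, $\mathsf{VarElim}(F(x_1,\dots,x_n),a(s_1,\dots,s_m))=\varphi$, and $\vartheta=\varphi|_V$ with $V=\{F\}\cup\mathtt{fv}(a(s_1,\dots,s_m))$. (Fail) $\{t\simeq^?s\}\uplus P;\sigma;\mathfrak{d}\leadsto\bot$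 if no other rule applies to the selected equation. $\mathsf{VarElim}(t,s)$ starts from $\{t\simeq^?s\};\varepsilon$ and applies as long as possible: (VE1) $\{F(x_1,\dots,x_n)\simeq^?a(s_1,\dots,s_m)\}\uplus P;\sigma\leadsto\{H_1(x_1,\dots,x_n)\simeq^?s_1,\dots,H_m(x_1,\dots,x_n)\simeq^?s_m\}\cup P;\sigma\vartheta$, where $a$ is a constant or in $\{x_1,\dots,x_n\}$, $\vartheta=\{F\mapsto\lambda x_1,\dots,x_n.a(H_1(x_1,\dots,x_n),\dots,H_m(x_1,\dots,x_n))\}$ with $H_i$ fresh of appropriate types; (VE2) $\{F(x_1,\dots,x_n)\simeq^?G(y_1,\dots,y_m)\}\uplus P;\sigma\leadsto P\vartheta;\sigma\vartheta$, where $\{x_1,\dots,x_n\}\cap\{y_1,\dots,y_m\}=\{z_1,\dots,z_k\}$ and $\vartheta=\{F\mapsto\lambda x_1,\dots,x_n.H(z_1,\dots,z_k),G\mapsto\lambda y_1,\dots,y_m.H(z_1,\dots,z_k)\}$ with $H$ fresh. If it ends in $\emptyset;\varphi$, then $\mathsf{VarElim}(t,s)=\varphi$. *)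

theory Defs
  imports Complex_Main
begin

datatype ty = Base nat | Fun ty ty

type_synonym const = "nat \<times> ty"
type_synonym fvar = "nat \<times> ty"

fun arg_tys :: "ty \<Rightarrow> ty list" where
  "arg_tys (Base b) = []"
| "arg_tys (Fun A B) = A # arg_tys B"

fun res_ty :: "ty \<Rightarrow> ty" where
  "res_ty (Base b) = Base b"
| "res_ty (Fun A B) = res_ty B"

definition arrows :: "ty list \<Rightarrow> ty \<Rightarrow> ty" where
  "arrows Ts B = foldr Fun Ts B"

section \<open>Terms in beta-normal, eta-long form (de Bruijn indices for bound variables)\<close>

datatype hd = Cn const | Bv nat

text \<open>A normal form is a lambda (with binder type), a rigid head applied to a list of
  arguments, or a free variable applied to a list of bound variables (kept eta-normal).\<close>
datatype tm = Lam ty tm | App hd "tm list" | FApp fvar "nat list"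

definition lams :: "ty list \<Rightarrow> tm \<Rightarrow> tm" where
  "lams Ts t = foldr Lam Ts t"

text \<open>Typing in context \<open>\<Gamma>\<close> (index 0 = innermost binder). The judgement only admits
  beta-normal, eta-long higher-order patterns: applications are of base type and free
  variables are applied to pairwise distinct bound variables.\<close>
inductive wt :: "ty list \<Rightarrow> tm \<Rightarrow> ty \<Rightarrow> bool" where
  wt_Lam: "wt (T # \<Gamma>) t U \<Longrightarrow> wt \<Gamma> (Lam T t) (Fun T U)"
| wt_Cn: "snd c = arrows Ts (Base b) \<Longrightarrow> list_all2 (wt \<Gamma>) ts Ts
          \<Longrightarrow> wt \<Gamma> (App (Cn c) ts) (Base b)"
| wt_Bv: "i < length \<Gamma> \<Longrightarrow> \<Gamma> ! i = arrows Ts (Base b) \<Longrightarrow> list_all2 (wt \<Gamma>) ts Ts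
          \<Longrightarrow> wt \<Gamma> (App (Bv i) ts) (Base b)"
| wt_FApp: "distinct xs \<Longrightarrow> (\<forall>x\<in>set xs. x < length \<Gamma>)
          \<Longrightarrow> snd F = arrows (map ((!) \<Gamma>) xs) (Base b)
          \<Longrightarrow> wt \<Gamma> (FApp F xs) (Base b)"

definition hopattern :: "tm \<Rightarrow> ty \<Rightarrow> bool" where
  "hopattern t T \<longleftrightarrow> wt [] t T"

fun fv :: "tm \<Rightarrow> fvar set" where
  "fv (Lam T t) = fv t"
| "fv (App h ts) = (\<Union>t\<in>set ts. fv t)"
| "fv (FApp F xs) = {F}"

definition lift :: "(nat \<Rightarrow> nat) \<Rightarrow> nat \<Rightarrow> nat" where
  "lift \<rho> k = (case k of 0 \<Rightarrow> 0 | Suc j \<Rightarrow> Suc (\<rho> j))"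

fun rename :: "(nat \<Rightarrow> nat) \<Rightarrow> tm \<Rightarrow> tm" where
  "rename \<rho> (Lam T t) = Lam T (rename (lift \<rho>) t)"
| "rename \<rho> (App (Cn c) ts) = App (Cn c) (map (rename \<rho>) ts)"
| "rename \<rho> (App (Bv i) ts) = App (Bv (\<rho> i)) (map (rename \<rho>) ts)"
| "rename \<rho> (FApp F xs) = FApp F (map \<rho> xs)"

fun unlam :: "nat \<Rightarrow> tm \<Rightarrow> tm" where
  "unlam 0 t = t"
| "unlam (Suc n) (Lam T t) = unlam n t"
| "unlam (Suc n) t = t"

text \<open>Beta-normal form of \<open>(\<lambda>y1..yn. b) x1 .. xn\<close> for bound variables \<open>xi\<close>:
  the body with \<open>yi\<close> renamed to \<open>xi\<close>.\<close>
definition inst :: "tm \<Rightarrow> nat list \<Rightarrow> tm" where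
  "inst u xs = (let n = length xs in
     rename (\<lambda>k. if k < n then xs ! (n - 1 - k) else k - n) (unlam n u))"

text \<open>Substitutions: finite partial maps (None = identity).\<close>
type_synonym sub = "fvar \<rightharpoonup> tm"

fun app :: "sub \<Rightarrow> tm \<Rightarrow> tm" where
  "app \<sigma> (Lam T t) = Lam T (app \<sigma> t)"
| "app \<sigma> (App h ts) = App h (map (app \<sigma>) ts)"
| "app \<sigma> (FApp F xs) = (case \<sigma> F of None \<Rightarrow> FApp F xs | Some u \<Rightarrow> inst u xs)"

text \<open>Composition: \<open>t (comp \<sigma> \<theta>) = (t \<sigma>) \<theta>\<close> (first \<open>\<sigma>\<close>, then \<open>\<theta>\<close>).\<close>
definition comp :: "sub \<Rightarrow> sub \<Rightarrow> sub" where
  "comp \<sigma> \<theta> = (\<lambda>X. case \<sigma> X of Some u \<Rightarrow> Some (app \<theta> u) | None \<Rightarrow> \<theta> X)"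

definition fv_sub :: "sub \<Rightarrow> fvar set" where
  "fv_sub \<sigma> = dom \<sigma> \<union> (\<Union>u\<in>ran \<sigma>. fv u)"

type_synonym eqn = "tm \<times> tm"

definition fv_eqs :: "eqn set \<Rightarrow> fvar set" where
  "fv_eqs P = (\<Union>(l, r)\<in>P. fv l \<union> fv r)"

definition app_eqs :: "sub \<Rightarrow> eqn set \<Rightarrow> eqn set" where
  "app_eqs \<theta> P = (\<lambda>(l, r). (app \<theta> l, app \<theta> r)) ` P"

text \<open>On variables it is forced to be the identity
  (1 on equal, 0 on distinct variables and between a variable and a constant), so only
  its restriction to constants is a parameter.\<close>
definition similarity :: "(const \<Rightarrow> const \<Rightarrow> real) \<Rightarrow> bool" where
  "similarity R \<longleftrightarrow>
     (\<forall>a b. 0 \<le> R a b \<and> R a b \<le> 1) \<and> (\<forall>a. R a a = 1) \<and> (\<forall>a b. R a b = R b a) \<and>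
     (\<forall>a b c. min (R a b) (R b c) \<le> R a c) \<and> (\<forall>a b. snd a \<noteq> snd b \<longrightarrow> R a b = 0)"

fun simH :: "(const \<Rightarrow> const \<Rightarrow> real) \<Rightarrow> hd \<Rightarrow> hd \<Rightarrow> real" where
  "simH R (Cn c) (Cn d) = R c d"
| "simH R (Bv i) (Bv j) = (if i = j then 1 else 0)"
| "simH R _ _ = 0"

fun simR :: "(const \<Rightarrow> const \<Rightarrow> real) \<Rightarrow> tm \<Rightarrow> tm \<Rightarrow> real"
and simRs :: "(const \<Rightarrow> const \<Rightarrow> real) \<Rightarrow> tm list \<Rightarrow> tm list \<Rightarrow> real" where
  "simR R (Lam T t) (Lam U s) = (if T = U then simR R t s else 0)"
| "simR R (App f ts) (App g ss) = min (simH R f g) (simRs R ts ss)"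
| "simR R (FApp F xs) (FApp G ys) = (if F = G \<and> xs = ys then 1 else 0)"
| "simR R _ _ = 0"
| "simRs R [] [] = 1"
| "simRs R (t # ts) (s # ss) = min (simR R t s) (simRs R ts ss)"
| "simRs R _ _ = 0"

fun idx :: "nat list \<Rightarrow> nat \<Rightarrow> nat" where
  "idx [] x = 0"
| "idx (y # ys) x = (if y = x then 0 else Suc (idx ys x))"

fun rigid_ok :: "nat list \<Rightarrow> hd \<Rightarrow> bool" where
  "rigid_ok xs (Cn c) = True"
| "rigid_ok xs (Bv j) = (j \<in> set xs)"

fun head_ty :: "ty list \<Rightarrow> nat list \<Rightarrow> hd \<Rightarrow> ty" where
  "head_ty Tx xs (Cn c) = snd c"
| "head_ty Tx xs (Bv j) = Tx ! idx xs j"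

text \<open>The head \<open>a\<close> seen inside \<open>\<lambda>x1..xn\<close> (where \<open>xi\<close> has index \<open>n-1-(i-1)\<close>).\<close>
fun head_bind :: "nat list \<Rightarrow> hd \<Rightarrow> hd" where
  "head_bind xs (Cn c) = Cn c"
| "head_bind xs (Bv j) = Bv (length xs - 1 - idx xs j)"

inductive ve_step :: "fvar set \<Rightarrow> eqn set \<times> sub \<Rightarrow> eqn set \<times> sub \<Rightarrow> bool" for A where
  VE1: "(FApp F xs, App a ss) \<in> P \<Longrightarrow> rigid_ok xs a \<Longrightarrow>
        Tx = arg_tys (snd F) \<Longrightarrow> n = length xs \<Longrightarrow>
        Ta = arg_tys (head_ty Tx xs a) \<Longrightarrow> length ss = length Ta \<Longrightarrow>
        length Hs = length ss \<Longrightarrow> distinct Hs \<Longrightarrow>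
        (\<forall>H\<in>set Hs. H \<notin> A \<union> fv_eqs P \<union> fv_sub \<sigma>) \<Longrightarrow>
        (\<forall>i<length ss. snd (Hs ! i) = arrows Tx (Ta ! i)) \<Longrightarrow>
        length bs = length ss \<Longrightarrow>
        (\<forall>i<length ss. ss ! i = lams (arg_tys (Ta ! i)) (bs ! i)) \<Longrightarrow>
        \<theta> = [F \<mapsto> lams Tx (App (head_bind xs a)
               (map (\<lambda>i. let k = length (arg_tys (Ta ! i)) in
                      lams (arg_tys (Ta ! i)) (FApp (Hs ! i) (rev [0..<n + k])))
                    [0..<length ss]))] \<Longrightarrow>
        Q = (\<lambda>i. let k = length (arg_tys (Ta ! i)) in
               (FApp (Hs ! i) (map (\<lambda>j. j + k) xs @ rev [0..<k]), bs ! i)) ` {..<length ss} \<Longrightarrow>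
        ve_step A (P, \<sigma>) (Q \<union> (P - {(FApp F xs, App a ss)}), comp \<sigma> \<theta>)"
| VE2: "(FApp F xs, FApp G ys) \<in> P \<Longrightarrow>
        Tx = arg_tys (snd F) \<Longrightarrow> Ty = arg_tys (snd G) \<Longrightarrow>
        zs = filter (\<lambda>x. x \<in> set ys) xs \<Longrightarrow>
        H \<notin> A \<union> fv_eqs P \<union> fv_sub \<sigma> \<Longrightarrow>
        snd H = arrows (map (\<lambda>z. Tx ! idx xs z) zs) (res_ty (snd F)) \<Longrightarrow>
        \<theta> = [F \<mapsto> lams Tx (FApp H (map (\<lambda>z. length xs - 1 - idx xs z) zs)),
              G \<mapsto> lams Ty (FApp H (map (\<lambda>z. length ys - 1 - idx ys z) zs))] \<Longrightarrow>
        ve_step A (P, \<sigma>) (app_eqs \<theta> (P - {(FApp F xs, FApp G ys)}), comp \<sigma> \<theta>)"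

text \<open>\<open>VarElim(t,s) = \<phi>\<close> (avoiding the variables in \<open>A\<close> when choosing fresh ones).\<close>
definition var_elim :: "fvar set \<Rightarrow> tm \<Rightarrow> tm \<Rightarrow> sub \<Rightarrow> bool" where
  "var_elim A t s \<phi> \<longleftrightarrow> (ve_step A)\<^sup>*\<^sup>* ({(t, s)}, Map.empty) ({}, \<phi>)"

type_synonym config = "eqn set \<times> sub \<times> real"

inductive hopsu_step :: "(const \<Rightarrow> const \<Rightarrow> real) \<Rightarrow> real \<Rightarrow> config \<Rightarrow> config \<Rightarrow> bool"
  for R \<mu> where
  Abs: "(Lam T t, Lam T s) \<in> P \<Longrightarrow>
        hopsu_step R \<mu> (P, \<sigma>, d) (insert (t, s) (P - {(Lam T t, Lam T s)}), \<sigma>, d)"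
| Dec: "(App f ts, App g ss) \<in> P \<Longrightarrow> length ts = length ss \<Longrightarrow>
        min d (simH R f g) \<ge> \<mu> \<Longrightarrow>
        hopsu_step R \<mu> (P, \<sigma>, d)
          (set (zip ts ss) \<union> (P - {(App f ts, App g ss)}), \<sigma>, min d (simH R f g))"
| SV: "(FApp F xs, FApp F ys) \<in> P \<Longrightarrow> length xs = length ys \<Longrightarrow>
        Tx = arg_tys (snd F) \<Longrightarrow>
        ps = filter (\<lambda>p. xs ! p = ys ! p) [0..<length xs] \<Longrightarrow>
        H \<notin> fv_eqs P \<union> fv_sub \<sigma> \<Longrightarrow>
        snd H = arrows (map ((!) Tx) ps) (res_ty (snd F)) \<Longrightarrow>
        \<theta> = [F \<mapsto> lams Tx (FApp H (map (\<lambda>p. length xs - 1 - p) ps))] \<Longrightarrow>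
        hopsu_step R \<mu> (P, \<sigma>, d)
          (app_eqs \<theta> (P - {(FApp F xs, FApp F ys)}), comp \<sigma> \<theta>, d)"
| Ori: "(App a ss, FApp F xs) \<in> P \<Longrightarrow> rigid_ok xs a \<Longrightarrow>
        hopsu_step R \<mu> (P, \<sigma>, d)
          (insert (FApp F xs, App a ss) (P - {(App a ss, FApp F xs)}), \<sigma>, d)"
| LF: "(FApp F xs, r) \<in> P \<Longrightarrow> F \<notin> fv r \<Longrightarrow>
        (\<exists>a ss. r = App a ss \<and> rigid_ok xs a) \<or> (\<exists>G ys. r = FApp G ys) \<Longrightarrow>
        var_elim (fv_eqs P \<union> fv_sub \<sigma>) (FApp F xs) r \<phi> \<Longrightarrow>
        \<theta> = \<phi> |` (insert F (fv r)) \<Longrightarrow>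
        hopsu_step R \<mu> (P, \<sigma>, d) (app_eqs \<theta> (P - {(FApp F xs, r)}), comp \<sigma> \<theta>, d)"

end

theory Submission
  imports Defs
begin

text \<open>Every step of HOPSU preserves the following relation between a configuration
  \<open>P; \<sigma>; d\<close> and the input pair: for every well-formed substitution \<open>\<tau>\<close>, the degree
  \<open>R(t\<sigma>\<tau>, s\<sigma>\<tau>)\<close> is the minimum of \<open>d\<close> and of the degrees \<open>R(l\<tau>, r\<tau>)\<close> of the
  equations \<open>(l, r) \<in> P\<close>. Abs and Ori leave this minimum unchanged, Dec moves the similarity
  of the two heads from the equation into \<open>d\<close>, and SV and LF compose \<open>\<sigma>\<close> with a unifier
  \<open>\<theta>\<close> of the selected equation, which then has degree 1 and can be dropped. For LF the
  unifier is computed by VarElim, whose soundness rests on a similar invariant: the current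
  substitution followed by any unifier of the remaining equations unifies the original pair,
  and since the variable heading each left-hand side occurs nowhere else, each binding only
  affects its own equation. For the final configuration \<open>{}; \<sigma>; d\<close> and \<open>\<tau> = \<epsilon>\<close> the
  invariant reads \<open>R(t\<sigma>, s\<sigma>) = d\<close>, while \<open>d \<ge> \<mu>\<close> is maintained by the side condition
  of Dec.\<close>

lemma lams_simps [simp]:
  "lams [] t = t" "lams (T # Ts) t = Lam T (lams Ts t)"
  by (simp_all add: lams_def)

lemma arrows_simps [simp]:
  "arrows [] B = B" "arrows (T # Ts) B = Fun T (arrows Ts B)"
  by (simp_all add: arrows_def)

lemma arg_tys_arrows [simp]: "arg_tys (arrows Ts B) = Ts @ arg_tys B"
  by (induction Ts) auto

lemma arg_tys_res_ty [simp]: "arg_tys (res_ty T) = []"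
  by (induction T) auto

lemma unlam_lams [simp]: "unlam (length Ts) (lams Ts b) = b"
  by (induction Ts) auto

lemma app_lams [simp]: "app \<theta> (lams Ts b) = lams Ts (app \<theta> b)"
  by (induction Ts) auto

lemma fv_lams [simp]: "fv (lams Ts b) = fv b"
  by (induction Ts) auto

lemma fv_rename [simp]: "fv (rename \<rho> t) = fv t"
  by (induction \<rho> t rule: rename.induct) auto

lemma fv_unlam [simp]: "fv (unlam n t) = fv t"
  by (induction n t rule: unlam.induct) auto

subsection \<open>Renaming bound variables\<close>

lemma funpow_lift: "(lift ^^ k) \<rho> i = (if i < k then i else \<rho> (i - k) + k)"
proof (induction k arbitrary: i)
  case (Suc k)
  then show ?case by (cases i) (auto simp: lift_def)
qed simp

lemma rename_lams: "rename \<rho> (lams Ts b) = lams Ts (rename ((lift ^^ length Ts) \<rho>) b)"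
  by (induction Ts arbitrary: \<rho>) (auto simp: funpow_swap1)

lemma lift_comp: "lift (\<rho>1 \<circ> \<rho>2) = lift \<rho>1 \<circ> lift \<rho>2"
  by (auto simp: lift_def split: nat.splits)

lemma rename_rename: "rename \<rho>1 (rename \<rho>2 t) = rename (\<rho>1 \<circ> \<rho>2) t"
proof (induction t arbitrary: \<rho>1 \<rho>2)
  case (App h ts)
  then show ?case by (cases h) auto
qed (simp_all add: lift_comp)

fun rename_hd :: "(nat \<Rightarrow> nat) \<Rightarrow> hd \<Rightarrow> hd" where
  "rename_hd \<rho> (Cn c) = Cn c"
| "rename_hd \<rho> (Bv i) = Bv (\<rho> i)"

lemma rename_App: "rename \<rho> (App h ts) = App (rename_hd \<rho> h) (map (rename \<rho>) ts)"
  by (cases h) auto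

fun bvars_below :: "nat \<Rightarrow> tm \<Rightarrow> bool" where
  "bvars_below k (Lam T t) = bvars_below (Suc k) t"
| "bvars_below k (App (Cn c) ts) = (\<forall>t\<in>set ts. bvars_below k t)"
| "bvars_below k (App (Bv i) ts) = (i < k \<and> (\<forall>t\<in>set ts. bvars_below k t))"
| "bvars_below k (FApp F xs) = (\<forall>x\<in>set xs. x < k)"

lemma bvars_below_lams [simp]: "bvars_below k (lams Ts b) = bvars_below (k + length Ts) b"
  by (induction Ts arbitrary: k) auto

lemma bvars_below_mono: "bvars_below m t \<Longrightarrow> m \<le> k \<Longrightarrow> bvars_below k t"
  by (induction m t arbitrary: k rule: bvars_below.induct) auto

lemma bvars_below_unlam: "bvars_below j u \<Longrightarrow> bvars_below (j + n) (unlam n u)"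
proof (induction n u arbitrary: j rule: unlam.induct)
  case (2 n T t)
  then show ?case by (metis add_Suc_shift bvars_below.simps(1) unlam.simps(2))
qed (auto intro: bvars_below_mono)

lemma rename_cong:
  "bvars_below k t \<Longrightarrow> (\<forall>i<k. \<rho>1 i = \<rho>2 i) \<Longrightarrow> rename \<rho>1 t = rename \<rho>2 t"
proof (induction k t arbitrary: \<rho>1 \<rho>2 rule: bvars_below.induct)
  case (1 k T t)
  then have "\<forall>i<Suc k. lift \<rho>1 i = lift \<rho>2 i"
    by (auto simp: lift_def split: nat.splits)
  then show ?case using 1 by simp
qed auto

lemma bvars_below_rename:
  "bvars_below m t \<Longrightarrow> (\<forall>i<m. \<rho> i < k) \<Longrightarrow> bvars_below k (rename \<rho> t)"
proof (induction m t arbitrary: \<rho> k rule: bvars_below.induct)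
  case (1 m T t)
  then have "\<forall>i<Suc m. lift \<rho> i < Suc k"
    by (auto simp: lift_def split: nat.splits)
  then show ?case using 1 by simp
qed auto

subsection \<open>Substitutions\<close>

definition arg_renaming :: "nat list \<Rightarrow> nat \<Rightarrow> nat" where
  "arg_renaming xs = (\<lambda>k. if k < length xs then xs ! (length xs - 1 - k) else k - length xs)"

lemma inst_eq_rename: "inst u xs = rename (arg_renaming xs) (unlam (length xs) u)"
  by (simp add: inst_def arg_renaming_def Let_def)

lemma inst_lams: "length xs = length Ts \<Longrightarrow> inst (lams Ts b) xs = rename (arg_renaming xs) b"
  by (metis inst_eq_rename unlam_lams)

definition closed_subst :: "sub \<Rightarrow> bool" where
  "closed_subst \<theta> \<longleftrightarrow> (\<forall>F u. \<theta> F = Some u \<longrightarrow> bvars_below 0 u)"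

lemma app_rename:
  assumes "closed_subst \<theta>"
  shows "app \<theta> (rename \<rho> t) = rename \<rho> (app \<theta> t)"
proof (induction t arbitrary: \<rho>)
  case (App h ts)
  then show ?case by (cases h) auto
next
  case (FApp F xs)
  show ?case
  proof (cases "\<theta> F")
    case (Some u)
    let ?n = "length xs"
    have "bvars_below 0 u"
      using assms Some unfolding closed_subst_def by blast
    then have "bvars_below ?n (unlam ?n u)"
      using bvars_below_unlam[of 0 u ?n] by simp
    then have "rename (arg_renaming (map \<rho> xs)) (unlam ?n u) = rename (\<rho> \<circ> arg_renaming xs) (unlam ?n u)"
      by (rule rename_cong) (simp add: arg_renaming_def)
    then show ?thesis
      using Some by (simp add: inst_eq_rename rename_rename)
  qed simp
qed simp

lemma bvars_below_app:
  assumes "closed_subst \<theta>"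
  shows "bvars_below k t \<Longrightarrow> bvars_below k (app \<theta> t)"
proof (induction k t rule: bvars_below.induct)
  case (4 k F xs)
  show ?case
  proof (cases "\<theta> F")
    case (Some u)
    have "bvars_below 0 u"
      using assms Some unfolding closed_subst_def by blast
    then have "bvars_below (length xs) (unlam (length xs) u)"
      using bvars_below_unlam[of 0 u] by simp
    then have "bvars_below k (rename (arg_renaming xs) (unlam (length xs) u))"
      by (rule bvars_below_rename) (use 4 in \<open>auto simp: arg_renaming_def\<close>)
    then show ?thesis
      using Some by (simp add: inst_eq_rename)
  qed (use 4 in simp)
qed auto

text \<open>Only when a free variable is applied to all of its arguments does \<open>inst\<close> of a
  binding \<open>lams (arg_tys (snd F)) b\<close> perform the intended beta-reduction.\<close>
fun saturated :: "tm \<Rightarrow> bool" where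
  "saturated (Lam T t) = saturated t"
| "saturated (App h ts) = (\<forall>t\<in>set ts. saturated t)"
| "saturated (FApp F xs) = (length xs = length (arg_tys (snd F)))"

lemma saturated_lams [simp]: "saturated (lams Ts b) = saturated b"
  by (induction Ts) auto

lemma saturated_rename [simp]: "saturated (rename \<rho> t) = saturated t"
  by (induction \<rho> t rule: rename.induct) auto

definition wf_binding :: "fvar \<Rightarrow> tm \<Rightarrow> bool" where
  "wf_binding F u \<longleftrightarrow> bvars_below 0 u \<and> saturated u \<and> (\<exists>b. u = lams (arg_tys (snd F)) b)"

definition wf_subst :: "sub \<Rightarrow> bool" where
  "wf_subst \<theta> \<longleftrightarrow> (\<forall>F u. \<theta> F = Some u \<longrightarrow> wf_binding F u)"

lemma wf_subst_empty [simp]: "wf_subst Map.empty"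
  by (simp add: wf_subst_def)

lemma wf_subst_upd: "wf_subst \<theta> \<Longrightarrow> wf_binding F u \<Longrightarrow> wf_subst (\<theta>(F \<mapsto> u))"
  by (simp add: wf_subst_def)

lemma wf_subst_restrict: "wf_subst \<theta> \<Longrightarrow> wf_subst (\<theta> |` A)"
  by (simp add: wf_subst_def restrict_map_def)

lemma wf_subst_closed: "wf_subst \<theta> \<Longrightarrow> closed_subst \<theta>"
  by (simp add: wf_subst_def wf_binding_def closed_subst_def)

lemma wf_subst_SomeE:
  assumes "wf_subst \<theta>" "\<theta> F = Some u"
  obtains b where "u = lams (arg_tys (snd F)) b" "bvars_below (length (arg_tys (snd F))) b"
    "saturated b"
  using assms unfolding wf_subst_def wf_binding_def by fastforce

lemma saturated_app: "wf_subst \<theta> \<Longrightarrow> saturated t \<Longrightarrow> saturated (app \<theta> t)"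
proof (induction t)
  case (FApp F xs)
  show ?case
  proof (cases "\<theta> F")
    case (Some u)
    then obtain b where "u = lams (arg_tys (snd F)) b" "saturated b"
      using FApp.prems(1) by (elim wf_subst_SomeE)
    with Some FApp.prems(2) show ?thesis
      by (simp add: inst_lams)
  qed (use FApp in simp)
qed auto

lemma app_comp:
  "wf_subst \<sigma> \<Longrightarrow> closed_subst \<theta> \<Longrightarrow> saturated t \<Longrightarrow> app (comp \<sigma> \<theta>) t = app \<theta> (app \<sigma> t)"
proof (induction t)
  case (FApp F xs)
  show ?case
  proof (cases "\<sigma> F")
    case (Some u)
    then obtain b where "u = lams (arg_tys (snd F)) b"
      using FApp.prems(1) by (elim wf_subst_SomeE)
    with Some FApp.prems show ?thesis
      by (simp add: comp_def inst_lams app_rename)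
  qed (simp add: comp_def)
qed auto

lemma app_comp_shift:
  assumes "wf_subst \<sigma>" "wf_subst \<theta>" "closed_subst \<tau>" "saturated t"
  shows "app (comp \<theta> \<tau>) (app \<sigma> t) = app \<tau> (app (comp \<sigma> \<theta>) t)"
  using assms by (simp add: app_comp saturated_app wf_subst_closed)

lemma wf_subst_comp:
  assumes "wf_subst \<sigma>" "wf_subst \<theta>"
  shows "wf_subst (comp \<sigma> \<theta>)"
  unfolding wf_subst_def
proof (intro allI impI)
  fix F u
  assume "comp \<sigma> \<theta> F = Some u"
  then consider v where "\<sigma> F = Some v" "u = app \<theta> v" | "\<sigma> F = None" "\<theta> F = Some u"
    by (auto simp: comp_def split: option.splits)
  then show "wf_binding F u"
  proof cases
    case 1
    then have "wf_binding F v"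
      using assms(1) unfolding wf_subst_def by blast
    with 1 assms(2) show ?thesis
      by (auto simp: wf_binding_def bvars_below_app wf_subst_closed saturated_app)
  next
    case 2
    with assms(2) show ?thesis
      unfolding wf_subst_def by blast
  qed
qed

lemma app_empty [simp]: "app Map.empty t = t"
  by (induction t) (auto simp: map_idI)

lemma app_cong: "(\<forall>X\<in>fv t. \<theta>1 X = \<theta>2 X) \<Longrightarrow> app \<theta>1 t = app \<theta>2 t"
  by (induction t) auto

lemma app_id: "(\<forall>X\<in>fv t. \<theta> X = None) \<Longrightarrow> app \<theta> t = t"
  using app_cong[of t \<theta> Map.empty] by simp

lemma fv_app: "fv (app \<theta> t) \<subseteq> fv t \<union> (\<Union>u\<in>ran \<theta>. fv u)"
proof (induction t)
  case (FApp F xs)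
  show ?case
  proof (cases "\<theta> F")
    case (Some u)
    then have "u \<in> ran \<theta>" by (rule ranI)
    with Some show ?thesis by (auto simp: inst_eq_rename)
  qed simp
qed auto

lemma app_eqs_simps [simp]:
  "app_eqs \<theta> {} = {}"
  "app_eqs \<theta> (insert (l, r) P) = insert (app \<theta> l, app \<theta> r) (app_eqs \<theta> P)"
  "app_eqs \<theta> (P \<union> Q) = app_eqs \<theta> P \<union> app_eqs \<theta> Q"
  by (simp_all add: app_eqs_def image_Un)

definition saturated_eqs :: "eqn set \<Rightarrow> bool" where
  "saturated_eqs P \<longleftrightarrow> (\<forall>(l, r)\<in>P. saturated l \<and> saturated r)"

lemma saturated_eqsD: "saturated_eqs P \<Longrightarrow> (l, r) \<in> P \<Longrightarrow> saturated l \<and> saturated r"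
  by (auto simp: saturated_eqs_def)

lemma saturated_eqs_app_eqs: "wf_subst \<theta> \<Longrightarrow> saturated_eqs P \<Longrightarrow> saturated_eqs (app_eqs \<theta> P)"
  by (auto simp: saturated_eqs_def app_eqs_def saturated_app)

lemma app_eqs_comp:
  assumes "wf_subst \<theta>" "closed_subst \<tau>" "saturated_eqs P"
  shows "app_eqs (comp \<theta> \<tau>) P = app_eqs \<tau> (app_eqs \<theta> P)"
  unfolding app_eqs_def image_image
  using assms by (intro image_cong) (auto simp: saturated_eqs_def app_comp)

lemma app_eqs_id:
  assumes "\<forall>(l, r)\<in>P. \<forall>X\<in>fv l \<union> fv r. \<theta> X = None"
  shows "app_eqs \<theta> P = P"
proof -
  have "(\<lambda>(l, r). (app \<theta> l, app \<theta> r)) ` P = id ` P"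
    using assms by (intro image_cong) (auto simp: app_id)
  then show ?thesis
    by (simp add: app_eqs_def)
qed

lemma simH_le1: "similarity R \<Longrightarrow> simH R f g \<le> 1"
  by (cases "(R, f, g)" rule: simH.cases) (auto simp: similarity_def)

lemma simH_sym: "similarity R \<Longrightarrow> simH R f g = simH R g f"
  by (cases "(R, f, g)" rule: simH.cases) (auto simp: similarity_def)

lemma simH_refl: "similarity R \<Longrightarrow> simH R f f = 1"
  by (cases f) (auto simp: similarity_def)

lemma simR_le1: "similarity R \<Longrightarrow> simR R a b \<le> 1"
  and simRs_le1: "similarity R \<Longrightarrow> simRs R as bs \<le> 1"
  by (induction R a b and R as bs rule: simR_simRs.induct)
    (auto simp: simH_le1 min.coboundedI2)

lemma simR_sym: "similarity R \<Longrightarrow> simR R a b = simR R b a"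
  and simRs_sym: "similarity R \<Longrightarrow> simRs R as bs = simRs R bs as"
  by (induction R a b and R as bs rule: simR_simRs.induct) (auto simp: simH_sym)

lemma simR_refl: "similarity R \<Longrightarrow> simR R a a = 1"
proof (induction a)
  case (App h ts)
  then have "simRs R ts ts = 1"
    by (induction ts) auto
  with App.prems show ?case by (simp add: simH_refl)
qed simp_all

definition eqs_sim_ge :: "(const \<Rightarrow> const \<Rightarrow> real) \<Rightarrow> real \<Rightarrow> eqn set \<Rightarrow> bool" where
  "eqs_sim_ge R c P \<longleftrightarrow> (\<forall>(l, r)\<in>P. c \<le> simR R l r)"

lemma eqs_sim_ge_simps [simp]:
  "eqs_sim_ge R c {}"
  "eqs_sim_ge R c (insert (l, r) P) \<longleftrightarrow> c \<le> simR R l r \<and> eqs_sim_ge R c P"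
  "eqs_sim_ge R c (P \<union> Q) \<longleftrightarrow> eqs_sim_ge R c P \<and> eqs_sim_ge R c Q"
  by (auto simp: eqs_sim_ge_def)

lemma le_simRs_iff:
  "length ts = length ss \<Longrightarrow> c \<le> simRs R ts ss \<longleftrightarrow> c \<le> 1 \<and> eqs_sim_ge R c (set (zip ts ss))"
proof (induction ts arbitrary: ss)
  case (Cons t ts)
  then obtain s ss' where "ss = s # ss'" by (cases ss) auto
  with Cons show ?case by auto
qed simp

lemma arg_renaming_rev:
  assumes "length xs = n" "k < n"
  shows "arg_renaming xs (n - Suc k) = xs ! k"
proof -
  have "n - Suc k < n" "n - Suc (n - Suc k) = k"
    using assms(2) by linarith+
  with assms(1) show ?thesis
    by (simp add: arg_renaming_def)
qed

lemma inst_lams_FApp: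
  "length Tx = length xs \<Longrightarrow> inst (lams Tx (FApp H ks)) xs = FApp H (map (arg_renaming xs) ks)"
  by (simp add: inst_lams)

lemma wf_binding_projection:
  assumes "Tx = arg_tys (snd F)" "length ks = length (arg_tys (snd H))" "\<forall>k\<in>set ks. k < length Tx"
  shows "wf_binding F (lams Tx (FApp H ks))"
  using assms by (auto simp: wf_binding_def)

lemma inst_projection_positions:
  assumes "length Tx = length xs" "length xs = n" "\<forall>p\<in>set ps. p < n"
  shows "inst (lams Tx (FApp H (map (\<lambda>p. n - 1 - p) ps))) xs = FApp H (map ((!) xs) ps)"
  using assms by (simp add: inst_lams_FApp arg_renaming_rev)

lemma idx_lt: "j \<in> set xs \<Longrightarrow> idx xs j < length xs"
  by (induction xs) auto

lemma nth_idx: "j \<in> set xs \<Longrightarrow> xs ! idx xs j = j"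
  by (induction xs) auto

lemma arg_renaming_idx: "j \<in> set xs \<Longrightarrow> arg_renaming xs (length xs - Suc (idx xs j)) = j"
  by (simp add: arg_renaming_rev[OF refl] idx_lt nth_idx)

lemma wf_binding_projection_idx:
  assumes "Tx = arg_tys (snd F)" "length Tx = length xs" "set zs \<subseteq> set xs"
    and "length zs = length (arg_tys (snd H))"
  shows "wf_binding F (lams Tx (FApp H (map (\<lambda>z. length xs - 1 - idx xs z) zs)))"
proof (rule wf_binding_projection)
  have "length xs - Suc (idx xs z) < length xs" if "z \<in> set zs" for z
    using that assms(3) idx_lt[of z xs] by auto
  then show "\<forall>k\<in>set (map (\<lambda>z. length xs - 1 - idx xs z) zs). k < length Tx"
    using assms(2) by auto
qed (use assms in simp_all)

lemma inst_projection_idx: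
  assumes "length Tx = length xs" "set zs \<subseteq> set xs"
  shows "inst (lams Tx (FApp H (map (\<lambda>z. length xs - 1 - idx xs z) zs))) xs = FApp H zs"
  using assms by (auto simp: inst_lams_FApp arg_renaming_idx intro!: map_idI)

lemma rename_hd_head_bind: "rigid_ok xs a \<Longrightarrow> rename_hd (arg_renaming xs) (head_bind xs a) = a"
  using arg_renaming_idx by (cases a) auto

lemma rename_lift_arg_renaming:
  "rename ((lift ^^ k) (arg_renaming xs)) (FApp H (rev [0..<length xs + k]))
   = FApp H (map (\<lambda>j. j + k) xs @ rev [0..<k])"
  by (simp, rule nth_equalityI) (auto simp: rev_nth funpow_lift arg_renaming_def nth_append)

text \<open>The VE1 binding is \<open>\<lambda>x\<^sub>1..x\<^sub>n. a(\<lambda>y\<^sub>1. H\<^sub>1(x\<^sub>1..x\<^sub>n, y\<^sub>1), .., \<lambda>y\<^sub>m. H\<^sub>m(x\<^sub>1..x\<^sub>n, y\<^sub>m))\<close>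
  (each \<open>y\<^sub>i\<close> a block of binders). Applied to \<open>xs\<close>, its \<open>i\<close>-th argument becomes
  \<open>\<lambda>y\<^sub>i. H\<^sub>i(xs, y\<^sub>i)\<close>, which a unifier of the new equation \<open>H\<^sub>i(xs, y\<^sub>i) \<approx> b\<^sub>i\<close>
  maps to the instance of \<open>s\<^sub>i = \<lambda>y\<^sub>i. b\<^sub>i\<close>.\<close>
lemma app_inst_imitation:
  fixes Ks :: "nat \<Rightarrow> ty list"
  assumes \<tau>: "closed_subst \<tau>" and xs: "length xs = length Tx" and a: "rigid_ok xs a"
    and bs: "\<forall>i<length ss. ss ! i = lams (Ks i) (bs ! i)"
    and unif: "\<forall>i<length ss. app \<tau> (FApp (Hs ! i) (map (\<lambda>j. j + length (Ks i)) xs @ rev [0..<length (Ks i)]))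
                             = app \<tau> (bs ! i)"
  shows "app \<tau> (inst (lams Tx (App (head_bind xs a)
           (map (\<lambda>i. lams (Ks i) (FApp (Hs ! i) (rev [0..<length xs + length (Ks i)]))) [0..<length ss])))
           xs)
       = app \<tau> (App a ss)"
    (is "app \<tau> (inst (lams Tx (App _ (map ?arg _))) xs) = _")
proof -
  let ?\<rho> = "arg_renaming xs"
  have arg: "rename ?\<rho> (app \<tau> (?arg i)) = app \<tau> (ss ! i)" if i: "i < length ss" for i
  proof -
    have "rename ?\<rho> (app \<tau> (?arg i)) = app \<tau> (rename ?\<rho> (?arg i))"
      by (simp only: app_rename[OF \<tau>])
    also have "\<dots> = lams (Ks i) (app \<tau> (FApp (Hs ! i) (map (\<lambda>j. j + length (Ks i)) xs @ rev [0..<length (Ks i)])))"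
      by (simp only: rename_lams rename_lift_arg_renaming app_lams)
    also have "\<dots> = app \<tau> (ss ! i)"
      using unif bs i by simp
    finally show ?thesis .
  qed
  have "app \<tau> (inst (lams Tx (App (head_bind xs a) (map ?arg [0..<length ss]))) xs)
      = rename ?\<rho> (App (head_bind xs a) (map (app \<tau>) (map ?arg [0..<length ss])))"
    by (simp only: inst_lams[OF xs] app_rename[OF \<tau>] app.simps(2))
  also have "\<dots> = App a (map (\<lambda>i. rename ?\<rho> (app \<tau> (?arg i))) [0..<length ss])"
    by (simp only: rename_App rename_hd_head_bind[OF a] map_map o_def)
  also have "map (\<lambda>i. rename ?\<rho> (app \<tau> (?arg i))) [0..<length ss] = map (app \<tau>) ss"
    by (rule nth_equalityI) (simp_all add: arg del: app.simps app_lams)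
  finally show ?thesis
    by simp
qed

lemma wf_binding_imitation:
  assumes "Tx = arg_tys (snd F)" "length xs = length Tx" "rigid_ok xs a"
    and "\<forall>i<m. snd (Hs ! i) = arrows Tx (Tas ! i)"
  shows "wf_binding F (lams Tx (App (head_bind xs a)
           (map (\<lambda>i. lams (arg_tys (Tas ! i)) (FApp (Hs ! i) (rev [0..<length xs + length (arg_tys (Tas ! i))])))
             [0..<m])))"
proof -
  have "bvars_below (length xs) (App (head_bind xs a) [])"
    using assms(3) by (cases a) (auto intro: diff_Suc_less length_pos_if_in_set)
  then show ?thesis
    using assms by (cases a) (auto simp: wf_binding_def)
qed

subsection \<open>Soundness of VarElim\<close>

definition unifies :: "sub \<Rightarrow> eqn set \<Rightarrow> bool" where
  "unifies \<tau> P \<longleftrightarrow> (\<forall>(l, r)\<in>app_eqs \<tau> P. l = r)"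

lemma unifies_simps [simp]:
  "unifies \<tau> (insert (l, r) P) \<longleftrightarrow> app \<tau> l = app \<tau> r \<and> unifies \<tau> P"
  "unifies \<tau> (P \<union> Q) \<longleftrightarrow> unifies \<tau> P \<and> unifies \<tau> Q"
  unfolding unifies_def by (simp_all add: ball_Un)

lemma unifiesD: "unifies \<tau> P \<Longrightarrow> (l, r) \<in> P \<Longrightarrow> app \<tau> l = app \<tau> r"
  unfolding unifies_def app_eqs_def by fastforce

lemma unifies_comp_iff:
  "wf_subst \<theta> \<Longrightarrow> closed_subst \<tau> \<Longrightarrow> saturated_eqs P \<Longrightarrow>
   unifies (comp \<theta> \<tau>) P \<longleftrightarrow> unifies \<tau> (app_eqs \<theta> P)"
  by (simp add: unifies_def app_eqs_comp)

definition lhs_vars_isolated :: "eqn set \<Rightarrow> bool" where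
  "lhs_vars_isolated P \<longleftrightarrow> (\<forall>l r. (l, r) \<in> P \<longrightarrow> (\<exists>X xs. l = FApp X xs \<and> X \<notin> fv r \<and>
      (\<forall>l' r'. (l', r') \<in> P \<longrightarrow> (l', r') \<noteq> (l, r) \<longrightarrow> X \<notin> fv l' \<and> X \<notin> fv r')))"

definition unifies_via :: "sub \<Rightarrow> eqn set \<Rightarrow> tm \<Rightarrow> tm \<Rightarrow> bool" where
  "unifies_via \<sigma> P t s \<longleftrightarrow>
     (\<forall>\<tau>. wf_subst \<tau> \<longrightarrow> unifies \<tau> P \<longrightarrow> app \<tau> (app \<sigma> t) = app \<tau> (app \<sigma> s))"

lemma unifies_via_comp:
  assumes \<sigma>: "wf_subst \<sigma>" and \<theta>: "wf_subst \<theta>" and ts: "saturated t" "saturated s"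
    and P: "saturated_eqs P" "unifies_via \<sigma> P t s"
    and P': "\<And>\<tau>. wf_subst \<tau> \<Longrightarrow> unifies \<tau> P' \<Longrightarrow> unifies \<tau> (app_eqs \<theta> P)"
  shows "unifies_via (comp \<sigma> \<theta>) P' t s"
  unfolding unifies_via_def
proof (intro allI impI)
  fix \<tau>
  assume \<tau>: "wf_subst \<tau>" "unifies \<tau> P'"
  then have "unifies (comp \<theta> \<tau>) P"
    using P' \<theta> P(1) by (simp add: unifies_comp_iff wf_subst_closed)
  then have "app (comp \<theta> \<tau>) (app \<sigma> t) = app (comp \<theta> \<tau>) (app \<sigma> s)"
    using P(2) wf_subst_comp[OF \<theta> \<tau>(1)] unfolding unifies_via_def by blast
  then show "app \<tau> (app (comp \<sigma> \<theta>) t) = app \<tau> (app (comp \<sigma> \<theta>) s)"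
    using \<sigma> \<theta> \<tau>(1) ts by (simp add: app_comp_shift wf_subst_closed)
qed

lemma fv_eqs_memD: "(l, r) \<in> P \<Longrightarrow> X \<notin> fv_eqs P \<Longrightarrow> X \<notin> fv l \<and> X \<notin> fv r"
  unfolding fv_eqs_def by blast

lemma lhs_vars_isolated_replace:
  assumes iso: "lhs_vars_isolated P" and e: "(l0, r0) \<in> P"
    and Q: "Q = (\<lambda>i. (FApp (Hs ! i) (ys i), rs i)) ` {..<length Hs}"
    and dist: "distinct Hs" and fresh: "\<forall>H\<in>set Hs. H \<notin> fv_eqs P"
    and fv_rs: "\<forall>i<length Hs. fv (rs i) \<subseteq> fv r0"
  shows "lhs_vars_isolated (Q \<union> (P - {(l0, r0)}))"
  unfolding lhs_vars_isolated_def
proof (intro allI impI)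
  fix l r
  assume lr: "(l, r) \<in> Q \<union> (P - {(l0, r0)})"
  have Hs_rs: "Hs ! i \<notin> fv (rs j)" if "i < length Hs" "j < length Hs" for i j
  proof -
    have "Hs ! i \<notin> fv r0"
      using fresh fv_eqs_memD[OF e] nth_mem[OF that(1)] by blast
    with fv_rs that(2) show ?thesis
      by blast
  qed
  show "\<exists>X xs. l = FApp X xs \<and> X \<notin> fv r \<and> (\<forall>l' r'. (l', r') \<in> Q \<union> (P - {(l0, r0)}) \<longrightarrow>
          (l', r') \<noteq> (l, r) \<longrightarrow> X \<notin> fv l' \<and> X \<notin> fv r')"
  proof (cases "(l, r) \<in> Q")
    case True
    then obtain i where i: "i < length Hs" "l = FApp (Hs ! i) (ys i)" "r = rs i"
      using Q by auto
    have "Hs ! i \<notin> fv l' \<and> Hs ! i \<notin> fv r'"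
      if "(l', r') \<in> Q \<union> (P - {(l0, r0)})" "(l', r') \<noteq> (l, r)" for l' r'
    proof (cases "(l', r') \<in> Q")
      case True
      then obtain j where j: "j < length Hs" "l' = FApp (Hs ! j) (ys j)" "r' = rs j"
        using Q by auto
      then have "Hs ! i \<noteq> Hs ! j"
        using that(2) i dist by (auto simp: nth_eq_iff_index_eq)
      then show ?thesis
        using j Hs_rs[OF i(1) j(1)] by simp
    next
      case False
      then show ?thesis
        using that(1) fresh fv_eqs_memD i(1) nth_mem by blast
    qed
    then show ?thesis
      using i Hs_rs[OF i(1) i(1)] by blast
  next
    case False
    then have lr: "(l, r) \<in> P" "(l, r) \<noteq> (l0, r0)"
      using lr by auto
    then obtain Y xs where Y: "l = FApp Y xs" "Y \<notin> fv r"
      and Y_other: "\<forall>l' r'. (l', r') \<in> P \<longrightarrow> (l', r') \<noteq> (l, r) \<longrightarrow> Y \<notin> fv l' \<and> Y \<notin> fv r'"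
      using iso unfolding lhs_vars_isolated_def by blast
    have "Y \<in> fv_eqs P"
      using lr(1) Y(1) unfolding fv_eqs_def by force
    then have "\<forall>j<length Hs. Y \<noteq> Hs ! j"
      using fresh nth_mem by blast
    moreover have "Y \<notin> fv r0"
      using Y_other e lr(2) by blast
    ultimately have "Y \<notin> fv l' \<and> Y \<notin> fv r'" if "(l', r') \<in> Q" for l' r'
    proof -
      from that Q obtain j where "j < length Hs" "l' = FApp (Hs ! j) (ys j)" "r' = rs j"
        by auto
      with \<open>\<forall>j<length Hs. Y \<noteq> Hs ! j\<close> \<open>Y \<notin> fv r0\<close> fv_rs show ?thesis
        by auto
    qed
    then show ?thesis
      using Y Y_other by blast
  qed
qed

lemma lhs_vars_isolated_app_eqs:
  assumes iso: "lhs_vars_isolated P" and e: "(l0, r0) \<in> P"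
    and dom: "dom \<theta> \<subseteq> fv l0 \<union> fv r0" and ran: "\<forall>u\<in>ran \<theta>. fv u \<subseteq> {H}"
    and fresh: "H \<notin> fv_eqs P"
  shows "lhs_vars_isolated (app_eqs \<theta> (P - {(l0, r0)}))"
  unfolding lhs_vars_isolated_def
proof (intro allI impI)
  have fv_app_\<theta>: "fv (app \<theta> u) \<subseteq> fv u \<union> {H}" for u
    using fv_app[of \<theta> u] ran by blast
  fix l' r'
  assume "(l', r') \<in> app_eqs \<theta> (P - {(l0, r0)})"
  then obtain l r where lr: "(l, r) \<in> P" "(l, r) \<noteq> (l0, r0)" "l' = app \<theta> l" "r' = app \<theta> r"
    unfolding app_eqs_def by auto
  then obtain Y xs where Y: "l = FApp Y xs" "Y \<notin> fv r"
    and Y_other: "\<forall>l2 r2. (l2, r2) \<in> P \<longrightarrow> (l2, r2) \<noteq> (l, r) \<longrightarrow> Y \<notin> fv l2 \<and> Y \<notin> fv r2"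
    using iso unfolding lhs_vars_isolated_def by blast
  have "Y \<notin> dom \<theta>"
    using Y_other e lr(2) dom by blast
  then have l': "l' = FApp Y xs"
    using lr(3) Y(1) by (auto simp: domIff)
  have "Y \<noteq> H"
    using fresh lr(1) Y(1) unfolding fv_eqs_def by force
  then have Y_app: "Y \<notin> fv (app \<theta> u)" if "Y \<notin> fv u" for u
    using that fv_app_\<theta>[of u] by blast
  have "Y \<notin> fv l2 \<and> Y \<notin> fv r2"
    if "(l2, r2) \<in> app_eqs \<theta> (P - {(l0, r0)})" "(l2, r2) \<noteq> (l', r')" for l2 r2
  proof -
    from that(1) obtain l3 r3
      where lr3: "(l3, r3) \<in> P" "l2 = app \<theta> l3" "r2 = app \<theta> r3"
      unfolding app_eqs_def by auto
    with that(2) lr(3,4) have "(l3, r3) \<noteq> (l, r)"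
      by auto
    with lr3 Y_other Y_app show ?thesis
      by blast
  qed
  with l' Y(2) Y_app lr(4) show "\<exists>X xs. l' = FApp X xs \<and> X \<notin> fv r' \<and>
      (\<forall>l2 r2. (l2, r2) \<in> app_eqs \<theta> (P - {(l0, r0)}) \<longrightarrow>
        (l2, r2) \<noteq> (l', r') \<longrightarrow> X \<notin> fv l2 \<and> X \<notin> fv r2)"
    by blast
qed

definition varelim_inv :: "tm \<Rightarrow> tm \<Rightarrow> eqn set \<times> sub \<Rightarrow> bool" where
  "varelim_inv t s c \<longleftrightarrow> (case c of (P, \<sigma>) \<Rightarrow>
     wf_subst \<sigma> \<and> saturated_eqs P \<and> lhs_vars_isolated P \<and> unifies_via \<sigma> P t s)"

lemma lhs_vars_isolatedE:
  assumes "lhs_vars_isolated P" "(FApp F xs, r) \<in> P"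
  obtains "F \<notin> fv r" "\<forall>(l', r')\<in>P - {(FApp F xs, r)}. F \<notin> fv l' \<and> F \<notin> fv r'"
  using assms unfolding lhs_vars_isolated_def by fastforce

lemma app_eqs_remove:
  "(l, r) \<in> P \<Longrightarrow> app_eqs \<theta> P = insert (app \<theta> l, app \<theta> r) (app_eqs \<theta> (P - {(l, r)}))"
  by (metis app_eqs_simps(2) insert_Diff)

lemma unifies_app_eqs_isolated:
  assumes iso: "lhs_vars_isolated P" and e: "(FApp F xs, r) \<in> P"
    and unif: "unifies \<tau> (P - {(FApp F xs, r)})" "app \<tau> (inst U xs) = app \<tau> r"
  shows "unifies \<tau> (app_eqs [F \<mapsto> U] P)"
proof -
  from iso e obtain F_r: "F \<notin> fv r"
    and F_other: "\<forall>(l', r')\<in>P - {(FApp F xs, r)}. F \<notin> fv l' \<and> F \<notin> fv r'"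
    by (rule lhs_vars_isolatedE)
  have "app [F \<mapsto> U] r = r"
    using F_r by (intro app_id) auto
  moreover have "app_eqs [F \<mapsto> U] (P - {(FApp F xs, r)}) = P - {(FApp F xs, r)}"
    using F_other by (intro app_eqs_id) auto
  ultimately show ?thesis
    using unif app_eqs_remove[OF e, of "[F \<mapsto> U]"] by simp
qed

lemma ve_step_preserves_inv:
  assumes "ve_step A c c'" "saturated t" "saturated s" "varelim_inv t s c"
  shows "varelim_inv t s c'"
  using assms
proof (induction rule: ve_step.induct)
  case (VE1 F xs a ss P Tx n Ta Hs \<sigma> bs \<theta> Q)
  let ?e = "(FApp F xs, App a ss)"
  let ?Ks = "\<lambda>i. arg_tys (Ta ! i)"
  let ?U = "lams Tx (App (head_bind xs a) (map (\<lambda>i. lams (?Ks i)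
              (FApp (Hs ! i) (rev [0..<length xs + length (?Ks i)]))) [0..<length ss]))"
  let ?lhs = "\<lambda>i. FApp (Hs ! i) (map (\<lambda>j. j + length (?Ks i)) xs @ rev [0..<length (?Ks i)])"
  from VE1.prems have \<sigma>: "wf_subst \<sigma>"
    and P: "saturated_eqs P" "lhs_vars_isolated P" "unifies_via \<sigma> P t s"
    by (simp_all add: varelim_inv_def)
  from P(1) VE1.hyps(1,3) have xs: "length xs = length Tx" and ss_sat: "\<forall>s\<in>set ss. saturated s"
    by (auto simp: saturated_eqs_def)
  have \<theta>: "\<theta> = [F \<mapsto> ?U]"
    using VE1.hyps(4,13) by (simp add: Let_def)
  have "wf_binding F ?U"
    using VE1.hyps(3) xs VE1.hyps(2,10) by (rule wf_binding_imitation)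
  then have wf_\<theta>: "wf_subst \<theta>"
    unfolding \<theta> by (intro wf_subst_upd wf_subst_empty)
  have Q: "Q = (\<lambda>i. (?lhs i, bs ! i)) ` {..<length Hs}"
    using VE1.hyps(7,14) by (simp add: Let_def)
  have bs: "fv (bs ! i) \<subseteq> fv (App a ss) \<and> saturated (bs ! i)" if "i < length ss" for i
  proof -
    from that have "ss ! i \<in> set ss"
      by simp
    moreover from that VE1.hyps(12) have "ss ! i = lams (?Ks i) (bs ! i)"
      by simp
    ultimately show ?thesis
      using ss_sat by auto
  qed
  have iso: "lhs_vars_isolated (Q \<union> (P - {?e}))"
    using VE1.hyps(7,9) bs
    by (intro lhs_vars_isolated_replace[OF P(2) VE1.hyps(1) Q VE1.hyps(8)]) auto
  have "saturated_eqs Q"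
    using Q VE1.hyps(7,10) xs bs unfolding saturated_eqs_def by auto
  with P(1) have sat: "saturated_eqs (Q \<union> (P - {?e}))"
    unfolding saturated_eqs_def by blast
  have "unifies_via (comp \<sigma> \<theta>) (Q \<union> (P - {?e})) t s"
  proof (rule unifies_via_comp[OF \<sigma> wf_\<theta> VE1.prems(1,2) P(1,3)])
    fix \<tau>
    assume \<tau>: "wf_subst \<tau>" "unifies \<tau> (Q \<union> (P - {?e}))"
    from \<tau>(2) have "unifies \<tau> Q"
      by simp
    then have "app \<tau> (?lhs i) = app \<tau> (bs ! i)" if "i < length ss" for i
      by (rule unifiesD) (use that Q VE1.hyps(7) in auto)
    then have "app \<tau> (inst ?U xs) = app \<tau> (App a ss)"
      by (intro app_inst_imitation[OF wf_subst_closed[OF \<tau>(1)] xs VE1.hyps(2,12)]) blast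
    with \<tau>(2) show "unifies \<tau> (app_eqs \<theta> P)"
      unfolding \<theta> by (intro unifies_app_eqs_isolated[OF P(2) VE1.hyps(1)]) simp_all
  qed
  with \<sigma> wf_\<theta> iso sat show ?case
    by (simp add: varelim_inv_def wf_subst_comp)
next
  case (VE2 F xs G ys P Tx Ty zs H \<sigma> \<theta>)
  let ?e = "(FApp F xs, FApp G ys)"
  let ?UF = "lams Tx (FApp H (map (\<lambda>z. length xs - 1 - idx xs z) zs))"
  let ?UG = "lams Ty (FApp H (map (\<lambda>z. length ys - 1 - idx ys z) zs))"
  from VE2.prems have \<sigma>: "wf_subst \<sigma>"
    and P: "saturated_eqs P" "lhs_vars_isolated P" "unifies_via \<sigma> P t s"
    by (simp_all add: varelim_inv_def)
  from P(1) VE2.hyps(1-3) have xs: "length Tx = length xs" and ys: "length Ty = length ys"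
    by (auto simp: saturated_eqs_def)
  from P(2) VE2.hyps(1) have "F \<noteq> G"
    by (rule lhs_vars_isolatedE) simp
  have zs: "set zs \<subseteq> set xs" "set zs \<subseteq> set ys"
    using VE2.hyps(4) by auto
  have \<theta>: "\<theta> = [F \<mapsto> ?UF, G \<mapsto> ?UG]"
    using VE2.hyps(7) by simp
  have H: "length zs = length (arg_tys (snd H))"
    using VE2.hyps(6) by simp
  have "wf_binding F ?UF" "wf_binding G ?UG"
    using wf_binding_projection_idx[OF VE2.hyps(2) xs zs(1) H]
      wf_binding_projection_idx[OF VE2.hyps(3) ys zs(2) H] .
  then have wf_\<theta>: "wf_subst \<theta>"
    unfolding \<theta> by (intro wf_subst_upd wf_subst_empty)
  have "app \<theta> (FApp F xs) = FApp H zs" "app \<theta> (FApp G ys) = FApp H zs"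
    using \<theta> \<open>F \<noteq> G\<close> inst_projection_idx[OF xs zs(1)] inst_projection_idx[OF ys zs(2)] by simp_all
  then have unif_e: "app \<theta> (FApp F xs) = app \<theta> (FApp G ys)"
    by simp
  have "dom \<theta> \<subseteq> fv (FApp F xs) \<union> fv (FApp G ys)" "\<forall>u\<in>ran \<theta>. fv u \<subseteq> {H}"
    using \<theta> by (auto simp: ran_def)
  then have iso: "lhs_vars_isolated (app_eqs \<theta> (P - {?e}))"
    using VE2.hyps(5) by (intro lhs_vars_isolated_app_eqs[OF P(2) VE2.hyps(1)]) auto
  have sat: "saturated_eqs (app_eqs \<theta> (P - {?e}))"
    using P(1) wf_\<theta> by (intro saturated_eqs_app_eqs) (auto simp: saturated_eqs_def)
  have "unifies_via (comp \<sigma> \<theta>) (app_eqs \<theta> (P - {?e})) t s"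
    using unif_e app_eqs_remove[OF VE2.hyps(1), of \<theta>]
    by (intro unifies_via_comp[OF \<sigma> wf_\<theta> VE2.prems(1,2) P(1,3)]) simp
  with \<sigma> wf_\<theta> iso sat show ?case
    by (simp add: varelim_inv_def wf_subst_comp)
qed

lemma var_elim_unifies:
  assumes "var_elim A (FApp F xs) r \<phi>" "F \<notin> fv r" "saturated (FApp F xs)" "saturated r"
  shows "wf_subst \<phi> \<and> app \<phi> (FApp F xs) = app \<phi> r"
proof -
  have "lhs_vars_isolated {(FApp F xs, r)}"
    using assms(2) unfolding lhs_vars_isolated_def by blast
  with assms(3,4) have "varelim_inv (FApp F xs) r ({(FApp F xs, r)}, Map.empty)"
    by (simp add: varelim_inv_def saturated_eqs_def unifies_via_def)
  with assms(1) have "varelim_inv (FApp F xs) r ({}, \<phi>)"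
    unfolding var_elim_def
    by (induction rule: rtranclp_induct) (auto intro: ve_step_preserves_inv[OF _ assms(3,4)])
  then show ?thesis
    by (auto simp: varelim_inv_def unifies_via_def unifies_def dest: spec[of _ Map.empty])
qed

subsection \<open>The invariant of HOPSU\<close>

text \<open>The last conjunct expresses \<open>R(t\<sigma>\<tau>, s\<sigma>\<tau>) = min d (min {R(l\<tau>, r\<tau>) | (l, r) \<in> P})\<close>
  through its lower bounds \<open>c\<close>, since \<open>P\<close> is an arbitrary set; quantifying over all \<open>\<tau>\<close> is
  what lets it survive composition with a binding.\<close>
definition hopsu_inv :: "(const \<Rightarrow> const \<Rightarrow> real) \<Rightarrow> real \<Rightarrow> tm \<Rightarrow> tm \<Rightarrow> config \<Rightarrow> bool" where
  "hopsu_inv R \<mu> t s cfg \<longleftrightarrow> (case cfg of (P, \<sigma>, d) \<Rightarrow>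
     wf_subst \<sigma> \<and> saturated_eqs P \<and> \<mu> \<le> d \<and> d \<le> 1 \<and>
     (\<forall>\<tau> c. wf_subst \<tau> \<longrightarrow>
        (c \<le> simR R (app \<tau> (app \<sigma> t)) (app \<tau> (app \<sigma> s)) \<longleftrightarrow>
         c \<le> d \<and> eqs_sim_ge R c (app_eqs \<tau> P))))"

lemma hopsu_inv_subst:
  assumes R: "similarity R" and ts: "saturated t" "saturated s"
    and inv: "hopsu_inv R \<mu> t s (P, \<sigma>, d)" and e: "(l0, r0) \<in> P"
    and \<theta>: "wf_subst \<theta>" "app \<theta> l0 = app \<theta> r0"
  shows "hopsu_inv R \<mu> t s (app_eqs \<theta> (P - {(l0, r0)}), comp \<sigma> \<theta>, d)"
proof -
  from inv have \<sigma>: "wf_subst \<sigma>" and P: "saturated_eqs P" and d: "\<mu> \<le> d" "d \<le> 1"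
    and deg: "\<And>\<tau> c. wf_subst \<tau> \<Longrightarrow> c \<le> simR R (app \<tau> (app \<sigma> t)) (app \<tau> (app \<sigma> s)) \<longleftrightarrow>
                c \<le> d \<and> eqs_sim_ge R c (app_eqs \<tau> P)"
    by (auto simp: hopsu_inv_def)
  have "c \<le> simR R (app \<tau> (app (comp \<sigma> \<theta>) t)) (app \<tau> (app (comp \<sigma> \<theta>) s)) \<longleftrightarrow>
        c \<le> d \<and> eqs_sim_ge R c (app_eqs \<tau> (app_eqs \<theta> (P - {(l0, r0)})))"
    if \<tau>: "wf_subst \<tau>" for \<tau> c
  proof -
    let ?u = "app \<tau> (app \<theta> r0)"
    have "app_eqs (comp \<theta> \<tau>) P = insert (?u, ?u) (app_eqs \<tau> (app_eqs \<theta> (P - {(l0, r0)})))"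
      using app_eqs_remove[OF e, of \<theta>] \<theta> \<tau> P by (simp add: app_eqs_comp wf_subst_closed)
    moreover have "simR R ?u ?u = 1"
      using R by (rule simR_refl)
    ultimately have "c \<le> d \<and> eqs_sim_ge R c (app_eqs (comp \<theta> \<tau>) P) \<longleftrightarrow>
                     c \<le> d \<and> eqs_sim_ge R c (app_eqs \<tau> (app_eqs \<theta> (P - {(l0, r0)})))"
      using d by auto
    moreover have "app (comp \<theta> \<tau>) (app \<sigma> u) = app \<tau> (app (comp \<sigma> \<theta>) u)" if "saturated u" for u
      using \<sigma> \<theta>(1) \<tau> that by (simp add: app_comp_shift wf_subst_closed)
    ultimately show ?thesis
      using deg[OF wf_subst_comp[OF \<theta>(1) \<tau>], of c] ts by simp
  qed
  moreover have "saturated_eqs (app_eqs \<theta> (P - {(l0, r0)}))"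
    using P \<theta>(1) by (intro saturated_eqs_app_eqs) (auto simp: saturated_eqs_def)
  ultimately show ?thesis
    using \<sigma> \<theta>(1) d by (simp add: hopsu_inv_def wf_subst_comp)
qed

lemma hopsu_inv_replace:
  assumes inv: "hopsu_inv R \<mu> t s (P, \<sigma>, d)" and e: "(l0, r0) \<in> P"
    and E: "saturated_eqs E" and d': "\<mu> \<le> d'" "d' \<le> 1"
    and deg_E: "\<And>\<tau> c. c \<le> d \<and> c \<le> simR R (app \<tau> l0) (app \<tau> r0) \<longleftrightarrow>
                  c \<le> d' \<and> eqs_sim_ge R c (app_eqs \<tau> E)"
  shows "hopsu_inv R \<mu> t s (E \<union> (P - {(l0, r0)}), \<sigma>, d')"
proof -
  from inv have \<sigma>: "wf_subst \<sigma>" and P: "saturated_eqs P"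
    and deg: "\<And>\<tau> c. wf_subst \<tau> \<Longrightarrow> c \<le> simR R (app \<tau> (app \<sigma> t)) (app \<tau> (app \<sigma> s)) \<longleftrightarrow>
                c \<le> d \<and> eqs_sim_ge R c (app_eqs \<tau> P)"
    by (auto simp: hopsu_inv_def)
  have "c \<le> simR R (app \<tau> (app \<sigma> t)) (app \<tau> (app \<sigma> s)) \<longleftrightarrow>
        c \<le> d' \<and> eqs_sim_ge R c (app_eqs \<tau> (E \<union> (P - {(l0, r0)})))"
    if "wf_subst \<tau>" for \<tau> c
    using deg[OF that, of c] deg_E[of c \<tau>] app_eqs_remove[OF e, of \<tau>] by auto
  moreover have "saturated_eqs (E \<union> (P - {(l0, r0)}))"
    using E P unfolding saturated_eqs_def by blast
  ultimately show ?thesis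
    using \<sigma> d' by (simp add: hopsu_inv_def)
qed

lemma app_eqs_zip: "app_eqs \<tau> (set (zip ts ss)) = set (zip (map (app \<tau>) ts) (map (app \<tau>) ss))"
  by (simp add: app_eqs_def zip_map_map)

lemma hopsu_step_preserves_inv:
  assumes "hopsu_step R \<mu> cfg cfg'" "similarity R" "saturated t" "saturated s"
    and "hopsu_inv R \<mu> t s cfg"
  shows "hopsu_inv R \<mu> t s cfg'"
  using assms
proof (induction rule: hopsu_step.induct)
  case (Abs T l r P \<sigma> d)
  from Abs.prems(4) have "saturated_eqs P" "\<mu> \<le> d" "d \<le> 1"
    by (simp_all add: hopsu_inv_def)
  moreover from saturated_eqsD[OF this(1) Abs.hyps] have "saturated_eqs {(l, r)}"
    by (simp add: saturated_eqs_def)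
  moreover have "c \<le> d \<and> c \<le> simR R (app \<tau> (Lam T l)) (app \<tau> (Lam T r)) \<longleftrightarrow>
                 c \<le> d \<and> eqs_sim_ge R c (app_eqs \<tau> {(l, r)})" for \<tau> c
    by simp
  ultimately have "hopsu_inv R \<mu> t s ({(l, r)} \<union> (P - {(Lam T l, Lam T r)}), \<sigma>, d)"
    by (intro hopsu_inv_replace[OF Abs.prems(4) Abs.hyps])
  then show ?case
    by simp
next
  case (Dec f ts g ss P d \<sigma>)
  from Dec.prems(4) have P: "saturated_eqs P" and d: "d \<le> 1"
    by (simp_all add: hopsu_inv_def)
  from saturated_eqsD[OF P Dec.hyps(1)] have E: "saturated_eqs (set (zip ts ss))"
    by (auto simp: saturated_eqs_def dest: set_zip_leftD set_zip_rightD)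
  have deg: "c \<le> d \<and> c \<le> simR R (app \<tau> (App f ts)) (app \<tau> (App g ss)) \<longleftrightarrow>
        c \<le> min d (simH R f g) \<and> eqs_sim_ge R c (app_eqs \<tau> (set (zip ts ss)))" for \<tau> c
    using Dec.hyps(2) d by (auto simp: app_eqs_zip le_simRs_iff)
  from d have "min d (simH R f g) \<le> 1"
    by simp
  from hopsu_inv_replace[OF Dec.prems(4) Dec.hyps(1) E Dec.hyps(3) this deg] show ?case .
next
  case (SV F xs ys P Tx ps H \<sigma> \<theta> d)
  let ?U = "lams Tx (FApp H (map (\<lambda>p. length xs - 1 - p) ps))"
  from SV.prems(4) have "saturated_eqs P"
    by (simp add: hopsu_inv_def)
  from saturated_eqsD[OF this SV.hyps(1)] SV.hyps(3) have Tx: "length Tx = length xs"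
    by simp
  have ps: "\<forall>p\<in>set ps. p < length xs" "map ((!) xs) ps = map ((!) ys) ps"
    using SV.hyps(4) by auto
  have "wf_binding F ?U"
    using SV.hyps(3,6) Tx ps(1) by (intro wf_binding_projection) auto
  then have \<theta>: "wf_subst \<theta>"
    unfolding SV.hyps(7) by (intro wf_subst_upd wf_subst_empty)
  have "inst ?U xs = FApp H (map ((!) xs) ps)"
    using Tx ps(1) by (intro inst_projection_positions) simp_all
  moreover have "inst ?U ys = FApp H (map ((!) ys) ps)"
    using Tx SV.hyps(2) ps(1) by (intro inst_projection_positions) simp_all
  ultimately have "app \<theta> (FApp F xs) = app \<theta> (FApp F ys)"
    using SV.hyps(7) ps(2) by simp
  with hopsu_inv_subst[OF SV.prems SV.hyps(1) \<theta>] show ?case .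
next
  case (Ori a ss F xs P \<sigma> d)
  from Ori.prems(4) have "saturated_eqs P" "\<mu> \<le> d" "d \<le> 1"
    by (simp_all add: hopsu_inv_def)
  moreover from saturated_eqsD[OF this(1) Ori.hyps(1)] have "saturated_eqs {(FApp F xs, App a ss)}"
    by (simp add: saturated_eqs_def)
  moreover have "c \<le> d \<and> c \<le> simR R (app \<tau> (App a ss)) (app \<tau> (FApp F xs)) \<longleftrightarrow>
                 c \<le> d \<and> eqs_sim_ge R c (app_eqs \<tau> {(FApp F xs, App a ss)})" for \<tau> c
    using simR_sym[OF Ori.prems(1), of "app \<tau> (App a ss)"] by simp
  ultimately have "hopsu_inv R \<mu> t s ({(FApp F xs, App a ss)} \<union> (P - {(App a ss, FApp F xs)}), \<sigma>, d)"
    by (intro hopsu_inv_replace[OF Ori.prems(4) Ori.hyps(1)])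
  then show ?case
    by simp
next
  case (LF F xs r P \<sigma> \<phi> \<theta> d)
  from LF.prems(4) have "saturated_eqs P"
    by (simp add: hopsu_inv_def)
  from saturated_eqsD[OF this LF.hyps(1)] have "saturated (FApp F xs)" "saturated r"
    by simp_all
  from var_elim_unifies[OF LF.hyps(4,2) this] have \<phi>: "wf_subst \<phi>" "app \<phi> (FApp F xs) = app \<phi> r"
    by simp_all
  have \<theta>_\<phi>: "app \<theta> u = app \<phi> u" if "fv u \<subseteq> insert F (fv r)" for u
    using LF.hyps(5) that by (intro app_cong) auto
  have "app \<theta> (FApp F xs) = app \<phi> (FApp F xs)"
    by (rule \<theta>_\<phi>) simp
  also have "\<dots> = app \<phi> r"
    by (rule \<phi>(2))
  also have "\<dots> = app \<theta> r"
    by (rule \<theta>_\<phi>[symmetric]) blast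
  finally have "app \<theta> (FApp F xs) = app \<theta> r" .
  moreover have "wf_subst \<theta>"
    unfolding LF.hyps(5) using \<phi>(1) by (rule wf_subst_restrict)
  ultimately show ?case
    by (intro hopsu_inv_subst[OF LF.prems LF.hyps(1)])
qed

lemma wt_saturated: "wt \<Gamma> t T \<Longrightarrow> saturated t"
proof (induction rule: wt.induct)
  case (wt_Cn c Ts b \<Gamma> ts)
  then show ?case by (auto simp: list_all2_conv_all_nth in_set_conv_nth)
next
  case (wt_Bv i \<Gamma> Ts b ts)
  then show ?case by (auto simp: list_all2_conv_all_nth in_set_conv_nth)
qed (auto simp: arrows_def[symmetric])

theorem theorem3:
  fixes R :: "const \<Rightarrow> const \<Rightarrow> real" and \<mu> d :: real
    and t s :: tm and T :: ty and \<sigma> :: sub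
  assumes "similarity R"
    and "0 < \<mu>" and "\<mu> \<le> 1"
    and "hopattern t T" and "hopattern s T"
    and "(hopsu_step R \<mu>)\<^sup>*\<^sup>* ({(t, s)}, Map.empty, 1) ({}, \<sigma>, d)"
  shows "d \<ge> \<mu> \<and> simR R (app \<sigma> t) (app \<sigma> s) = d"
proof -
  have ts: "saturated t" "saturated s"
    using assms(4,5) wt_saturated unfolding hopattern_def by blast+
  have "hopsu_inv R \<mu> t s ({(t, s)}, Map.empty, 1)"
    using ts assms(3) simR_le1[OF assms(1)]
    by (auto simp: hopsu_inv_def saturated_eqs_def intro: order.trans)
  with assms(6) have "hopsu_inv R \<mu> t s ({}, \<sigma>, d)"
    by (induction rule: rtranclp_induct) (auto intro: hopsu_step_preserves_inv[OF _ assms(1) ts])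
  then have "\<mu> \<le> d" and "c \<le> simR R (app \<sigma> t) (app \<sigma> s) \<longleftrightarrow> c \<le> d" for c
    by (auto simp: hopsu_inv_def dest: spec[of _ Map.empty])
  then show ?thesis
    by (meson order.antisym order.refl)
qed

end
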